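(* Let $G$ be a graph and $p$ a pendant vertex of $G$ with $N(p)=\{v\}$. Then: (1) $p$ and $v$ belong to every MDNS of $G$, and there exists an MDNS $S$ of $G$ such that $p$ and $v$ are the last two vertices of $S$; (2) if there exists an MDNS $S'$ of $G-p$ such that $v$ does not belong to $S'$, then $\tilde\gamma_{gr}^{\times 2}(G)=\tilde\gamma_{gr}^{\times 2}(G-p)+2$; otherwise $\tilde\gamma_{gr}^{\times 2}(G)=\tilde\gamma_{gr}^{\times 2}(G-p)+1$.
   Context: Graphs are finite, simple, undirected; $N[v]$ is the closed neighborhood, $N(v)$ the open neighborhood; a pendant vertex has degree 1. A sequence $S=(v_1,\dots,v_k)$ of distinct vertices of $G$ is a double neighborhood sequence (DNS) if for each $i$ some $u\in N[v_i]$ satisfies $|\{j<i: u\in N[v_j]\}|\le 1$. A maximum double neighborhood sequence (MDNS) of $G$ is a DNS of maximum length, and $\tilde\gamma_{gr}^{\times 2}(G)$ denotes this maximum length. *)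

theory Defs
  imports Main
begin

definition simple_graph :: "'a set \<Rightarrow> ('a \<Rightarrow> 'a \<Rightarrow> bool) \<Rightarrow> bool" where
  "simple_graph V E \<longleftrightarrow> finite V \<and> (\<forall>u w. E u w \<longrightarrow> u \<in> V \<and> w \<in> V)
     \<and> (\<forall>u w. E u w \<longrightarrow> E w u) \<and> (\<forall>u. \<not> E u u)"

definition open_nbhd :: "'a set \<Rightarrow> ('a \<Rightarrow> 'a \<Rightarrow> bool) \<Rightarrow> 'a \<Rightarrow> 'a set" where
  "open_nbhd V E v = {u \<in> V. E v u}"

definition closed_nbhd :: "'a set \<Rightarrow> ('a \<Rightarrow> 'a \<Rightarrow> bool) \<Rightarrow> 'a \<Rightarrow> 'a set" where
  "closed_nbhd V E v = insert v (open_nbhd V E v)"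

definition pendant :: "'a set \<Rightarrow> ('a \<Rightarrow> 'a \<Rightarrow> bool) \<Rightarrow> 'a \<Rightarrow> bool" where
  "pendant V E p \<longleftrightarrow> p \<in> V \<and> card (open_nbhd V E p) = 1"

definition del_vertex_V :: "'a set \<Rightarrow> 'a \<Rightarrow> 'a set" where
  "del_vertex_V V p = V - {p}"

definition del_vertex_E :: "('a \<Rightarrow> 'a \<Rightarrow> bool) \<Rightarrow> 'a \<Rightarrow> 'a \<Rightarrow> 'a \<Rightarrow> bool" where
  "del_vertex_E E p = (\<lambda>u w. E u w \<and> u \<noteq> p \<and> w \<noteq> p)"

definition is_DNS :: "'a set \<Rightarrow> ('a \<Rightarrow> 'a \<Rightarrow> bool) \<Rightarrow> 'a list \<Rightarrow> bool" where
  "is_DNS V E S \<longleftrightarrow> distinct S \<and> set S \<subseteq> V \<and>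
     (\<forall>i < length S. \<exists>u \<in> closed_nbhd V E (S ! i).
        card {j. j < i \<and> u \<in> closed_nbhd V E (S ! j)} \<le> 1)"

definition is_MDNS :: "'a set \<Rightarrow> ('a \<Rightarrow> 'a \<Rightarrow> bool) \<Rightarrow> 'a list \<Rightarrow> bool" where
  "is_MDNS V E S \<longleftrightarrow> is_DNS V E S \<and> (\<forall>T. is_DNS V E T \<longrightarrow> length T \<le> length S)"

definition gamma_gr2 :: "'a set \<Rightarrow> ('a \<Rightarrow> 'a \<Rightarrow> bool) \<Rightarrow> nat" where
  "gamma_gr2 V E = Max {length S | S. is_DNS V E S}"

end

theory Submission
  imports Defs
begin

text \<open>Let \<open>N[p] = {p, v}\<close>. The vertex \<open>p\<close> lies only in \<open>N[p]\<close> and \<open>N[v]\<close>, so whichever of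
\<open>p, v\<close> is still missing from a DNS can be appended with witness \<open>u = p\<close>; hence every
MDNS contains both, and moving them to the end keeps the DNS property. Conversely, deleting
\<open>p\<close> and \<open>v\<close> from a DNS of \<open>G\<close> leaves a DNS of \<open>G - p\<close> avoiding \<open>v\<close>, while any DNS of \<open>G - p\<close>
stays a DNS of \<open>G\<close> and can be extended by \<open>p\<close>. This gives
\<open>\<gamma>(G - p) + 1 \<le> \<gamma>(G) \<le> \<gamma>(G - p) + 2\<close>, with equality on the right exactly when some MDNS of
\<open>G - p\<close> avoids \<open>v\<close>.\<close>

definition double_nbhd_seq :: "('a \<Rightarrow> 'a set) \<Rightarrow> 'a set \<Rightarrow> 'a list \<Rightarrow> bool" where
  "double_nbhd_seq N V S \<longleftrightarrow> distinct S \<and> set S \<subseteq> V \<and>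
     (\<forall>i < length S. \<exists>u \<in> N (S ! i). card {w \<in> set (take i S). u \<in> N w} \<le> 1)"

lemma card_indices_take_distinct:
  assumes "distinct S" "i \<le> length S"
  shows "card {j. j < i \<and> P (S ! j)} = card {w \<in> set (take i S). P w}"
proof -
  have "{w \<in> set (take i S). P w} = (!) S ` {j. j < i \<and> P (S ! j)}"
    using assms(2) by (force simp: set_conv_nth nth_take)
  moreover have "inj_on ((!) S) {j. j < i \<and> P (S ! j)}"
    by (rule inj_on_nth) (use assms in auto)
  ultimately show ?thesis by (simp add: card_image)
qed

lemma is_DNS_iff_double_nbhd_seq: "is_DNS V E S \<longleftrightarrow> double_nbhd_seq (closed_nbhd V E) V S"
proof -
  have "card {j. j < i \<and> u \<in> closed_nbhd V E (S ! j)}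
      = card {w \<in> set (take i S). u \<in> closed_nbhd V E w}"
    if "distinct S" "i < length S" for i u
    using that by (intro card_indices_take_distinct) auto
  then show ?thesis
    unfolding is_DNS_def double_nbhd_seq_def by auto
qed

lemma double_nbhd_seq_Nil [simp]: "double_nbhd_seq N V []"
  by (simp add: double_nbhd_seq_def)

lemma double_nbhd_seq_snoc [simp]:
  "double_nbhd_seq N V (S @ [x]) \<longleftrightarrow> double_nbhd_seq N V S \<and> x \<notin> set S \<and> x \<in> V
     \<and> (\<exists>u \<in> N x. card {w \<in> set S. u \<in> N w} \<le> 1)"
  unfolding double_nbhd_seq_def by (auto simp: nth_append less_Suc_eq)

lemma double_nbhd_seq_filter: "double_nbhd_seq N V S \<Longrightarrow> double_nbhd_seq N V (filter P S)"
proof (induction S rule: rev_induct)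
  case (snoc x S)
  then obtain u where u: "u \<in> N x" "card {w \<in> set S. u \<in> N w} \<le> 1"
    by auto
  have "card {w \<in> set (filter P S). u \<in> N w} \<le> card {w \<in> set S. u \<in> N w}"
    by (rule card_mono) auto
  with u snoc show ?case
    by (cases "P x") (auto intro!: bexI[of _ u])
qed simp

lemma double_nbhd_seq_transfer:
  assumes "double_nbhd_seq N V S" "set S \<subseteq> V'"
    and "\<And>x u. x \<in> set S \<Longrightarrow> u \<in> N x \<Longrightarrow> u \<in> N' x"
    and "\<And>x u w. x \<in> set S \<Longrightarrow> u \<in> N x \<Longrightarrow> w \<in> set S \<Longrightarrow> u \<in> N' w \<Longrightarrow> u \<in> N w"
  shows "double_nbhd_seq N' V' S"
  unfolding double_nbhd_seq_def
proof (intro conjI allI impI)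
  fix i assume i: "i < length S"
  then obtain u where u: "u \<in> N (S ! i)" "card {w \<in> set (take i S). u \<in> N w} \<le> 1"
    using assms(1) unfolding double_nbhd_seq_def by blast
  have Si: "S ! i \<in> set S"
    using i by simp
  have "card {w \<in> set (take i S). u \<in> N' w} \<le> card {w \<in> set (take i S). u \<in> N w}"
    by (rule card_mono) (use assms(4)[OF Si u(1)] in \<open>auto dest: in_set_takeD\<close>)
  moreover have "u \<in> N' (S ! i)"
    using assms(3)[OF Si u(1)] .
  ultimately show "\<exists>u \<in> N' (S ! i). card {w \<in> set (take i S). u \<in> N' w} \<le> 1"
    using u(2) by (intro bexI[of _ u]) auto
qed (use assms(1,2) in \<open>auto simp: double_nbhd_seq_def\<close>)

lemma double_nbhd_seq_length_le: "finite V \<Longrightarrow> double_nbhd_seq N V S \<Longrightarrow> length S \<le> card V"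
  unfolding double_nbhd_seq_def by (metis card_mono distinct_card)

lemma finite_DNS_lengths: "finite V \<Longrightarrow> finite {length S | S. is_DNS V E S}"
  by (rule finite_subset[of _ "{..card V}"])
     (auto simp: is_DNS_iff_double_nbhd_seq dest: double_nbhd_seq_length_le)

lemma DNS_length_le_gamma_gr2: "finite V \<Longrightarrow> is_DNS V E S \<Longrightarrow> length S \<le> gamma_gr2 V E"
  unfolding gamma_gr2_def by (rule Max_ge) (auto simp: finite_DNS_lengths)

lemma gamma_gr2_attained: "finite V \<Longrightarrow> \<exists>S. is_DNS V E S \<and> length S = gamma_gr2 V E"
proof -
  assume "finite V"
  moreover have "is_DNS V E []"
    by (simp add: is_DNS_iff_double_nbhd_seq)
  ultimately have "gamma_gr2 V E \<in> {length S | S. is_DNS V E S}"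
    unfolding gamma_gr2_def by (intro Max_in finite_DNS_lengths) auto
  then show ?thesis by auto
qed

lemma is_MDNS_iff_length_gamma_gr2:
  "finite V \<Longrightarrow> is_MDNS V E S \<longleftrightarrow> is_DNS V E S \<and> length S = gamma_gr2 V E"
  unfolding is_MDNS_def
  by (metis DNS_length_le_gamma_gr2 gamma_gr2_attained le_antisym)

lemma MDNS_exists: "finite V \<Longrightarrow> \<exists>S. is_MDNS V E S"
  using gamma_gr2_attained is_MDNS_iff_length_gamma_gr2 by blast

locale pendant_vertex =
  fixes V :: "'a set" and E :: "'a \<Rightarrow> 'a \<Rightarrow> bool" and p v :: 'a
  assumes graph: "simple_graph V E"
    and p_in_V: "p \<in> V"
    and open_nbhd_p: "open_nbhd V E p = {v}"
begin

abbreviation "V' \<equiv> del_vertex_V V p"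
abbreviation "E' \<equiv> del_vertex_E E p"

lemma finite_V: "finite V" and finite_V': "finite V'"
  using graph by (auto simp: simple_graph_def del_vertex_V_def)

lemma edge_p_v: "E p v"
  using open_nbhd_p by (auto simp: open_nbhd_def)

lemma v_in_V: "v \<in> V" and v_neq_p: "v \<noteq> p"
  using edge_p_v graph by (auto simp: simple_graph_def)

lemma p_in_closed_nbhd_iff: "p \<in> closed_nbhd V E x \<longleftrightarrow> x = p \<or> x = v"
proof -
  have "E x p \<longleftrightarrow> x \<in> open_nbhd V E p"
    using graph by (auto simp: simple_graph_def open_nbhd_def)
  then show ?thesis
    using open_nbhd_p p_in_V by (auto simp: closed_nbhd_def open_nbhd_def)
qed

lemma closed_nbhd_del_vertex: "x \<noteq> p \<Longrightarrow> closed_nbhd V' E' x = closed_nbhd V E x - {p}"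
  by (auto simp: closed_nbhd_def open_nbhd_def del_vertex_V_def del_vertex_E_def)

text \<open>The witness \<open>u = p\<close> for the appended vertex has been seen at most once, namely by the
other vertex of \<open>{p, v}\<close>.\<close>

lemma DNS_snoc_pendant_pair:
  assumes "is_DNS V E S" "x \<in> {p, v}" "x \<notin> set S"
  shows "is_DNS V E (S @ [x])"
proof -
  have "{w \<in> set S. p \<in> closed_nbhd V E w} \<subseteq> {p, v} - {x}"
    using assms(3) by (auto simp: p_in_closed_nbhd_iff)
  then have "card {w \<in> set S. p \<in> closed_nbhd V E w} \<le> card ({p, v} - {x})"
    by (rule card_mono[rotated]) simp
  also have "\<dots> = 1"
    using assms(2) v_neq_p by auto
  finally show ?thesis
    using assms p_in_V v_in_V
    by (auto simp: is_DNS_iff_double_nbhd_seq p_in_closed_nbhd_iff intro!: bexI[of _ p])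
qed

lemma MDNS_contains_pendant_pair:
  assumes "is_MDNS V E S" "x \<in> {p, v}"
  shows "x \<in> set S"
proof (rule ccontr)
  assume "x \<notin> set S"
  then have "is_DNS V E (S @ [x])"
    using assms DNS_snoc_pendant_pair by (auto simp: is_MDNS_def)
  then show False
    using assms(1) by (fastforce simp: is_MDNS_def)
qed

lemma DNS_append_pendant_pair:
  assumes "is_DNS V E S" "p \<notin> set S" "v \<notin> set S"
  shows "is_DNS V E (S @ [p, v])"
  using DNS_snoc_pendant_pair[OF DNS_snoc_pendant_pair[OF assms(1) _ assms(2)], of v]
    assms(3) v_neq_p by simp

lemma DNS_remove_pendant_pair:
  assumes "is_DNS V E S"
  shows "is_DNS V' E' (filter (\<lambda>w. w \<notin> {p, v}) S)"
proof -
  let ?T = "filter (\<lambda>w. w \<notin> {p, v}) S"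
  have T: "double_nbhd_seq (closed_nbhd V E) V ?T"
    using assms by (simp add: is_DNS_iff_double_nbhd_seq double_nbhd_seq_filter)
  have same_nbhd: "closed_nbhd V' E' x = closed_nbhd V E x" if "x \<in> set ?T" for x
    using that closed_nbhd_del_vertex[of x] p_in_closed_nbhd_iff[of x] by auto
  have "double_nbhd_seq (closed_nbhd V' E') V' ?T"
  proof (rule double_nbhd_seq_transfer[OF T])
    show "set ?T \<subseteq> V'"
      using T by (auto simp: double_nbhd_seq_def del_vertex_V_def)
  qed (simp_all add: same_nbhd)
  then show ?thesis
    by (simp add: is_DNS_iff_double_nbhd_seq)
qed

lemma DNS_of_del_vertex:
  assumes "is_DNS V' E' S"
  shows "is_DNS V E S" and "p \<notin> set S"
proof -
  have sub: "set S \<subseteq> V - {p}"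
    using assms by (simp add: is_DNS_def del_vertex_V_def)
  then show "p \<notin> set S" by blast
  have not_p: "x \<in> set S \<Longrightarrow> x \<noteq> p" for x
    using sub by blast
  show "is_DNS V E S"
    using assms unfolding is_DNS_iff_double_nbhd_seq
    by (rule double_nbhd_seq_transfer) (use sub in \<open>auto simp: closed_nbhd_del_vertex not_p\<close>)
qed

lemma length_remove_pendant_pair:
  assumes "is_MDNS V E S"
  shows "length (filter (\<lambda>w. w \<notin> {p, v}) S) + 2 = length S"
proof -
  have "distinct (filter (\<lambda>w. w \<in> {p, v}) S)"
    using assms by (simp add: is_MDNS_def is_DNS_def)
  moreover have "set (filter (\<lambda>w. w \<in> {p, v}) S) = {p, v}"
    using MDNS_contains_pendant_pair[OF assms] by auto
  ultimately have "length (filter (\<lambda>w. w \<in> {p, v}) S) = card {p, v}"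
    by (metis distinct_card)
  then show ?thesis
    using sum_length_filter_compl[of "\<lambda>w. w \<in> {p, v}" S] v_neq_p by simp
qed

lemma MDNS_ending_in_pendant_pair: "\<exists>T. is_MDNS V E (T @ [p, v])"
proof -
  obtain S where S: "is_MDNS V E S"
    using MDNS_exists[OF finite_V] by blast
  let ?T = "filter (\<lambda>w. w \<notin> {p, v}) S"
  have "is_DNS V E (?T @ [p, v])"
    using S by (intro DNS_append_pendant_pair) (auto simp: is_MDNS_def is_DNS_iff_double_nbhd_seq
        double_nbhd_seq_filter)
  moreover have "length (?T @ [p, v]) = length S"
    using length_remove_pendant_pair[OF S] by simp
  ultimately show ?thesis
    using S by (metis finite_V is_MDNS_iff_length_gamma_gr2)
qed

lemma gamma_gr2_del_vertex_bounds:
  "gamma_gr2 V' E' + 1 \<le> gamma_gr2 V E" "gamma_gr2 V E \<le> gamma_gr2 V' E' + 2"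
proof -
  obtain S' where S': "is_DNS V' E' S'" "length S' = gamma_gr2 V' E'"
    using gamma_gr2_attained[OF finite_V'] by blast
  then have "is_DNS V E (S' @ [p])"
    using DNS_of_del_vertex DNS_snoc_pendant_pair by blast
  then show "gamma_gr2 V' E' + 1 \<le> gamma_gr2 V E"
    using DNS_length_le_gamma_gr2[OF finite_V] S'(2) by fastforce
  obtain S where S: "is_MDNS V E S"
    using MDNS_exists[OF finite_V] by blast
  then have "length (filter (\<lambda>w. w \<notin> {p, v}) S) \<le> gamma_gr2 V' E'"
    by (intro DNS_length_le_gamma_gr2 finite_V' DNS_remove_pendant_pair) (simp add: is_MDNS_def)
  then show "gamma_gr2 V E \<le> gamma_gr2 V' E' + 2"
    using S length_remove_pendant_pair[OF S] is_MDNS_iff_length_gamma_gr2[OF finite_V] by simp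
qed

lemma gamma_gr2_eq_plus_2_iff:
  "gamma_gr2 V E = gamma_gr2 V' E' + 2 \<longleftrightarrow> (\<exists>S'. is_MDNS V' E' S' \<and> v \<notin> set S')"
proof
  assume gamma: "gamma_gr2 V E = gamma_gr2 V' E' + 2"
  obtain S where S: "is_MDNS V E S"
    using MDNS_exists[OF finite_V] by blast
  let ?S' = "filter (\<lambda>w. w \<notin> {p, v}) S"
  have "is_MDNS V' E' ?S'"
    using S gamma length_remove_pendant_pair[OF S] DNS_remove_pendant_pair
    by (simp add: is_MDNS_iff_length_gamma_gr2 finite_V finite_V')
  then show "\<exists>S'. is_MDNS V' E' S' \<and> v \<notin> set S'"
    by auto
next
  assume "\<exists>S'. is_MDNS V' E' S' \<and> v \<notin> set S'"
  then obtain S' where S': "is_DNS V' E' S'" "length S' = gamma_gr2 V' E'" "v \<notin> set S'"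
    using is_MDNS_iff_length_gamma_gr2[OF finite_V'] by blast
  then have "is_DNS V E (S' @ [p, v])"
    using DNS_of_del_vertex DNS_append_pendant_pair by blast
  then have "gamma_gr2 V' E' + 2 \<le> gamma_gr2 V E"
    using DNS_length_le_gamma_gr2[OF finite_V] S'(2) by fastforce
  then show "gamma_gr2 V E = gamma_gr2 V' E' + 2"
    using gamma_gr2_del_vertex_bounds by simp
qed

end

theorem proposition3:
  fixes V :: "'a set" and E :: "'a \<Rightarrow> 'a \<Rightarrow> bool" and p v :: 'a
  assumes "simple_graph V E"
    and "p \<in> V"
    and "open_nbhd V E p = {v}"
  shows "(\<forall>S. is_MDNS V E S \<longrightarrow> p \<in> set S \<and> v \<in> set S)
    \<and> (\<exists>S T a b. is_MDNS V E S \<and> S = T @ [a, b] \<and> {a, b} = {p, v})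
    \<and> ((\<exists>S'. is_MDNS (del_vertex_V V p) (del_vertex_E E p) S' \<and> v \<notin> set S')
          \<longrightarrow> gamma_gr2 V E = gamma_gr2 (del_vertex_V V p) (del_vertex_E E p) + 2)
    \<and> (\<not> (\<exists>S'. is_MDNS (del_vertex_V V p) (del_vertex_E E p) S' \<and> v \<notin> set S')
          \<longrightarrow> gamma_gr2 V E = gamma_gr2 (del_vertex_V V p) (del_vertex_E E p) + 1)"
proof -
  interpret pendant_vertex V E p v
    using assms by unfold_locales
  obtain T where "is_MDNS V E (T @ [p, v])"
    using MDNS_ending_in_pendant_pair by blast
  then have "\<exists>S T a b. is_MDNS V E S \<and> S = T @ [a, b] \<and> {a, b} = {p, v}"
    by blast
  moreover have "\<forall>S. is_MDNS V E S \<longrightarrow> p \<in> set S \<and> v \<in> set S"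
    using MDNS_contains_pendant_pair by blast
  moreover have "gamma_gr2 V E = gamma_gr2 V' E' + 1"
    if "\<not> (\<exists>S'. is_MDNS V' E' S' \<and> v \<notin> set S')"
  proof -
    have "gamma_gr2 V E \<noteq> gamma_gr2 V' E' + 2"
      using that gamma_gr2_eq_plus_2_iff by blast
    with gamma_gr2_del_vertex_bounds show ?thesis by linarith
  qed
  ultimately show ?thesis
    using gamma_gr2_eq_plus_2_iff by blast
qed

end
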